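(* Let $\Gamma=(\mathcal{M},K)$ be a $d$-dimensional grid and let $\sigma$ be an outmap on $\Gamma$ with $\sigma(p)\cap p=\emptyset$ for every vertex $p$. Let $\Gamma'$ and $\Gamma''$ be two nonempty induced subgrids of $\Gamma$ with disjoint vertex sets, such that the union of their vertex sets is the vertex set of a nonempty induced subgrid $\Gamma'\cup\Gamma''$ of $\Gamma$. Let $x$ be the unique sink of $\Gamma'$ and $y$ the unique sink of $\Gamma''$ (with respect to the restricted outmaps). Then either (a) one of $x$, $y$ is the unique sink of $\Gamma'\cup\Gamma''$, or (b) $\sigma$ is not a unique sink orientation of $\Gamma$, and $\Gamma$ with $\sigma$ admits a violation of type (GUV1) or (GUV2) defined below.
   Context: Grid: let $n,d$ be positive integers, $\mathcal{M}=\{1,\dots,n\}$ (the directions), and $K=(\kappa_1,\dots,\kappa_d)$ a partition of $\mathcal{M}$ into ordered sets with $|\kappa_i|\ge 2$. The grid $\Gamma=(\mathcal{M},K)$ is the undirected graph with vertex set $V=\{p\subseteq\mathcal{M} : |p\cap\kappa_i|=1 \text{ for } i=1,\dots,d\}$ and edge set $\{\{p,q\}: p,q\in V,\ |p\oplus q|=2\}$ ($\oplus$ = symmetric difference). An outmap is a function $\sigma:V\to\mathcal{P}(\mathcal{M})$; $\sigma(p)$ is the set of directions in which $p$ has outgoing edges (edges of $p$ in other directions are incoming). A nonempty induced subgrid is given by $\mathcal{M}'\subseteq\mathcal{M}$ with $\mathcal{M}'\cap\kappa_i\neq\emptyset$ for all $i$; its vertices are $V'=\{p\subseteq\mathcal{M}':|p\cap\kappa_i|=1\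 \forall i\}$, its edges are those of $\Gamma$ between vertices of $V'$, and its restricted outmap is $\sigma'(p)=\sigma(p)\cap\mathcal{M}'$. A sink of a subgrid is a vertex $p$ with $\sigma'(p)=\emptyset$. $\sigma$ is a unique sink orientation (USO) if every nonempty induced subgrid has a unique sink. The refined index of an outmap $\sigma'$ on subgrid $(\mathcal{M}',K')$ is $r_{\sigma'}(p)=(|\sigma'(p)\cap\kappa'_1|,\dots,|\sigma'(p)\cap\kappa'_d|)$. Violations: (GUV1) a vertex $p$ with $p\cap\sigma(p)\neq\emptyset$; (GUV2) an induced subgrid $(\mathcal{M}',K')$ with restricted outmap $\sigma'$ and two distinct vertices $p\neq q$ of it with $r_{\sigma'}(p)=r_{\sigma'}(q)$. *)

theory Defs
  imports Main
begin

text \<open>Directions are \<open>{1..n}\<close>; the partition K = (kappa_1,...,kappa_d) is a list of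
  sets of directions (the order within each kappa_i plays no role here).\<close>

definition is_grid :: "nat \<Rightarrow> nat \<Rightarrow> nat set list \<Rightarrow> bool" where
  "is_grid n d K \<longleftrightarrow> n \<ge> 1 \<and> d \<ge> 1 \<and> length K = d
     \<and> (\<forall>i<d. K ! i \<subseteq> {1..n} \<and> card (K ! i) \<ge> 2)
     \<and> (\<forall>i<d. \<forall>j<d. i \<noteq> j \<longrightarrow> K ! i \<inter> K ! j = {})
     \<and> \<Union> (set K) = {1..n}"

definition vertices :: "nat set list \<Rightarrow> nat set \<Rightarrow> nat set set" where
  "vertices K M' = {p. p \<subseteq> M' \<and> (\<forall>i<length K. card (p \<inter> K ! i) = 1)}"

definition is_subgrid :: "nat \<Rightarrow> nat set list \<Rightarrow> nat set \<Rightarrow> bool" where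
  "is_subgrid n K M' \<longleftrightarrow> M' \<subseteq> {1..n} \<and> (\<forall>i<length K. M' \<inter> K ! i \<noteq> {})"

definition is_outmap :: "nat \<Rightarrow> nat set list \<Rightarrow> (nat set \<Rightarrow> nat set) \<Rightarrow> bool" where
  "is_outmap n K \<sigma> \<longleftrightarrow> (\<forall>p\<in>vertices K {1..n}. \<sigma> p \<subseteq> {1..n})"

text \<open>Sink w.r.t. the restricted outmap \<open>\<sigma>' p = \<sigma> p \<inter> M'\<close>.\<close>
definition is_sink :: "nat set list \<Rightarrow> (nat set \<Rightarrow> nat set) \<Rightarrow> nat set \<Rightarrow> nat set \<Rightarrow> bool" where
  "is_sink K \<sigma> M' p \<longleftrightarrow> p \<in> vertices K M' \<and> \<sigma> p \<inter> M' = {}"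

definition is_unique_sink :: "nat set list \<Rightarrow> (nat set \<Rightarrow> nat set) \<Rightarrow> nat set \<Rightarrow> nat set \<Rightarrow> bool" where
  "is_unique_sink K \<sigma> M' p \<longleftrightarrow> is_sink K \<sigma> M' p \<and> (\<forall>q. is_sink K \<sigma> M' q \<longrightarrow> q = p)"

definition is_USO :: "nat \<Rightarrow> nat set list \<Rightarrow> (nat set \<Rightarrow> nat set) \<Rightarrow> bool" where
  "is_USO n K \<sigma> \<longleftrightarrow> (\<forall>M'. is_subgrid n K M' \<longrightarrow> (\<exists>!p. is_sink K \<sigma> M' p))"

text \<open>Refined index of the restricted outmap on subgrid (M', K') with kappa'_i = kappa_i \<inter> M'.\<close>
definition refined_index :: "nat set list \<Rightarrow> (nat set \<Rightarrow> nat set) \<Rightarrow> nat set \<Rightarrow> nat set \<Rightarrow> nat list" where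
  "refined_index K \<sigma> M' p = map (\<lambda>k. card ((\<sigma> p \<inter> M') \<inter> (k \<inter> M'))) K"

definition GUV1 :: "nat \<Rightarrow> nat set list \<Rightarrow> (nat set \<Rightarrow> nat set) \<Rightarrow> bool" where
  "GUV1 n K \<sigma> \<longleftrightarrow> (\<exists>p\<in>vertices K {1..n}. p \<inter> \<sigma> p \<noteq> {})"

definition GUV2 :: "nat \<Rightarrow> nat set list \<Rightarrow> (nat set \<Rightarrow> nat set) \<Rightarrow> bool" where
  "GUV2 n K \<sigma> \<longleftrightarrow> (\<exists>M'. is_subgrid n K M' \<and>
     (\<exists>p\<in>vertices K M'. \<exists>q\<in>vertices K M'. p \<noteq> q \<and> refined_index K \<sigma> M' p = refined_index K \<sigma> M' q))"

end

theory Submission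
  imports Defs "HOL-Library.FuncSet" "HOL-Library.Disjoint_Sets"
begin

text \<open>If the union grid has a unique sink, that sink lies in one of the two parts and is a sink
  there, so it equals x or y. Otherwise \<open>\<sigma>\<close> is not a USO, and the refined index cannot be
  injective on the union: vertices correspond to choice functions picking one direction from
  each block, so they are exactly as many as the admissible refined indices (the index in block i
  is below the block size, since a vertex has no outgoing edge in its own direction). An injective
  refined index would therefore be a bijection onto them and hit the zero vector, the sink
  condition, exactly once.\<close>

lemma vertex_of_choice:
  assumes disj: "disjoint_family_on ((!) K) {..<length K}"
    and f: "\<forall>i<length K. f i \<in> M \<inter> K!i"
  shows "f ` {..<length K} \<in> vertices K M"
proof -
  have "f ` {..<length K} \<inter> K!i = {f i}" if i: "i < length K" for i
  proof
    show "f ` {..<length K} \<inter> K!i \<subseteq> {f i}"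
    proof
      fix e assume "e \<in> f ` {..<length K} \<inter> K!i"
      then obtain j where j: "j < length K" "e = f j" "e \<in> K!i" by auto
      then have "j = i" using disj f i unfolding disjoint_family_on_def by blast
      then show "e \<in> {f i}" using j by simp
    qed
  qed (use f i in auto)
  then show ?thesis using f unfolding vertices_def by auto
qed

lemma inj_on_vertex_of_choice:
  assumes disj: "disjoint_family_on ((!) K) {..<length K}"
  shows "inj_on (\<lambda>f. f ` {..<length K}) (\<Pi>\<^sub>E i\<in>{..<length K}. M \<inter> K!i)"
proof (rule inj_onI)
  fix f g
  assume f: "f \<in> (\<Pi>\<^sub>E i\<in>{..<length K}. M \<inter> K!i)" and g: "g \<in> (\<Pi>\<^sub>E i\<in>{..<length K}. M \<inter> K!i)"
    and eq: "f ` {..<length K} = g ` {..<length K}"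
  show "f = g"
  proof (rule PiE_ext[OF f g])
    fix i assume i: "i \<in> {..<length K}"
    then obtain j where j: "j < length K" "f i = g j" using eq by blast
    have "f i \<in> K!i" "g j \<in> K!j" using f g i j(1) by auto
    then have "i = j" using disj i j unfolding disjoint_family_on_def by auto
    then show "f i = g i" using j by simp
  qed
qed

lemma vertices_mono: "M \<subseteq> M' \<Longrightarrow> vertices K M \<subseteq> vertices K M'"
  unfolding vertices_def by auto

lemma finite_vertices: "finite M \<Longrightarrow> finite (vertices K M)"
  unfolding vertices_def by (rule finite_subset[of _ "Pow M"]) auto

lemma card_choices_le_card_vertices:
  assumes "disjoint_family_on ((!) K) {..<length K}" and "finite M"
  shows "card (\<Pi>\<^sub>E i\<in>{..<length K}. M \<inter> K!i) \<le> card (vertices K M)"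
  using assms by (intro card_inj_on_le[OF inj_on_vertex_of_choice])
    (auto intro!: vertex_of_choice simp: finite_vertices)

lemma vertex_through_direction:
  assumes disj: "disjoint_family_on ((!) K) {..<length K}"
    and blocks: "\<forall>i<length K. M \<inter> K!i \<noteq> {}"
    and e: "e \<in> M" "e \<in> K!j" "j < length K"
  shows "\<exists>p\<in>vertices K M. e \<in> p"
proof -
  have "\<forall>i\<in>{..<length K}. \<exists>a. a \<in> M \<inter> K!i" using blocks by blast
  then obtain c where c: "\<forall>i\<in>{..<length K}. c i \<in> M \<inter> K!i" by (metis bchoice)
  define f where "f = c(j := e)"
  have "\<forall>i<length K. f i \<in> M \<inter> K!i" using c e unfolding f_def by simp
  then have "f ` {..<length K} \<in> vertices K M" by (rule vertex_of_choice[OF disj])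
  moreover have "e \<in> f ` {..<length K}" using e(3) unfolding f_def by force
  ultimately show ?thesis by (rule rev_bexI)
qed

lemma subgrid_mono:
  assumes disj: "disjoint_family_on ((!) K) {..<length K}"
    and cover: "M \<subseteq> \<Union> (set K)"
    and blocks: "\<forall>i<length K. M \<inter> K!i \<noteq> {}"
    and "vertices K M \<subseteq> vertices K M'"
  shows "M \<subseteq> M'"
proof
  fix e assume "e \<in> M"
  then obtain k where "k \<in> set K" "e \<in> k" using cover by blast
  then obtain j where "j < length K" "e \<in> K!j" by (auto simp: in_set_conv_nth)
  then obtain p where p: "p \<in> vertices K M" "e \<in> p"
    using vertex_through_direction[OF disj blocks \<open>e \<in> M\<close>] by blast
  have "p \<in> vertices K M'" using p(1) assms(4) by auto
  then show "e \<in> M'" using p(2) unfolding vertices_def by auto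
qed

lemma refined_index_nth: "i < length K \<Longrightarrow> refined_index K \<sigma> M p ! i = card (\<sigma> p \<inter> M \<inter> K!i)"
  unfolding refined_index_def by (simp add: Int_ac)

lemma refined_index_nth_less:
  assumes p: "p \<in> vertices K M" and irr: "\<sigma> p \<inter> p = {}" and "finite M" and i: "i < length K"
  shows "refined_index K \<sigma> M p ! i < card (M \<inter> K!i)"
proof -
  have "card (p \<inter> K!i) = 1" using p i unfolding vertices_def by auto
  then obtain a where a: "p \<inter> K!i = {a}" by (rule card_1_singletonE)
  have "a \<in> M" using p a unfolding vertices_def by auto
  have "card (\<sigma> p \<inter> M \<inter> K!i) \<le> card (M \<inter> K!i - {a})"
    using irr a \<open>finite M\<close> by (intro card_mono) auto
  also have "\<dots> < card (M \<inter> K!i)"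
    using \<open>finite M\<close> \<open>a \<in> M\<close> a by (intro card_Diff1_less) auto
  finally show ?thesis using i by (simp add: refined_index_nth)
qed

lemma empty_outmap_iff_refined_index_zero:
  assumes "finite M" and "M \<subseteq> \<Union> (set K)"
  shows "\<sigma> p \<inter> M = {} \<longleftrightarrow> (\<forall>i<length K. refined_index K \<sigma> M p ! i = 0)"
proof -
  have "\<sigma> p \<inter> M = {} \<longleftrightarrow> (\<forall>i<length K. \<sigma> p \<inter> M \<inter> K!i = {})"
    using assms(2) by (fastforce simp: in_set_conv_nth)
  also have "\<dots> \<longleftrightarrow> (\<forall>i<length K. refined_index K \<sigma> M p ! i = 0)"
    using assms(1) by (simp add: refined_index_nth)
  finally show ?thesis .
qed

lemma ex_unique_sink_if_inj_on_refined_index: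
  assumes disj: "disjoint_family_on ((!) K) {..<length K}"
    and cover: "M \<subseteq> \<Union> (set K)" and fin: "finite M"
    and blocks: "\<forall>i<length K. M \<inter> K!i \<noteq> {}"
    and irr: "\<forall>p\<in>vertices K M. \<sigma> p \<inter> p = {}"
    and inj: "inj_on (refined_index K \<sigma> M) (vertices K M)"
  shows "\<exists>z. is_unique_sink K \<sigma> M z"
proof -
  define I where "I = {..<length K}"
  define V where "V = vertices K M"
  define box where "box = (\<Pi>\<^sub>E i\<in>I. {..<card (M \<inter> K!i)})"
  define g where "g p = (\<lambda>i\<in>I. refined_index K \<sigma> M p ! i)" for p
  have "refined_index K \<sigma> M p = map (g p) [0..<length K]" for p
    by (rule nth_equalityI) (auto simp: g_def I_def refined_index_def)
  then have g_inj: "inj_on g V"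
    using inj unfolding V_def by (metis (no_types, lifting) inj_onD inj_onI)
  have g_box: "g ` V \<subseteq> box"
    using refined_index_nth_less irr fin unfolding g_def box_def V_def I_def
    by (auto simp: image_subset_iff restrict_PiE_iff)
  have "finite box" unfolding box_def I_def by (intro finite_PiE) auto
  moreover have "card box \<le> card (g ` V)"
  proof -
    have "card box = card (\<Pi>\<^sub>E i\<in>I. M \<inter> K!i)" unfolding box_def I_def by (simp add: card_PiE)
    also have "\<dots> \<le> card V"
      unfolding I_def V_def using card_choices_le_card_vertices[OF disj fin] .
    finally show ?thesis by (simp add: card_image[OF g_inj])
  qed
  ultimately have g_onto: "g ` V = box" using g_box by (simp add: card_seteq)
  define zero where "zero = (\<lambda>i\<in>I. 0::nat)"
  have sink_iff: "\<sigma> q \<inter> M = {} \<longleftrightarrow> g q = zero" for q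
    unfolding empty_outmap_iff_refined_index_zero[OF fin cover] g_def zero_def I_def
    by (auto simp: fun_eq_iff)
  have "zero \<in> box"
    using blocks fin unfolding zero_def box_def I_def by (auto simp: card_gt_0_iff)
  then obtain z where z: "z \<in> V" "g z = zero" using g_onto by (metis imageE)
  have "is_unique_sink K \<sigma> M z"
    unfolding is_unique_sink_def is_sink_def
    using z sink_iff g_inj unfolding V_def by (metis inj_onD)
  then show ?thesis by blast
qed

lemma ex_unique_sink_if_USO:
  "is_USO n K \<sigma> \<Longrightarrow> is_subgrid n K M \<Longrightarrow> \<exists>z. is_unique_sink K \<sigma> M z"
  unfolding is_USO_def is_unique_sink_def by (metis (mono_tags))

lemma unique_sink_of_union:
  assumes "M1 \<subseteq> M3" "M2 \<subseteq> M3" "vertices K M3 \<subseteq> vertices K M1 \<union> vertices K M2"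
    and "is_unique_sink K \<sigma> M1 x" "is_unique_sink K \<sigma> M2 y"
    and "is_sink K \<sigma> M3 z"
  shows "z = x \<or> z = y"
proof -
  have "z \<in> vertices K M1 \<or> z \<in> vertices K M2" "\<sigma> z \<inter> M3 = {}"
    using assms(3,6) unfolding is_sink_def by auto
  then have "is_sink K \<sigma> M1 z \<or> is_sink K \<sigma> M2 z"
    using assms(1,2) unfolding is_sink_def by blast
  then show ?thesis using assms(4,5) unfolding is_unique_sink_def by blast
qed

lemma is_gridD:
  assumes "is_grid n d K"
  shows "disjoint_family_on ((!) K) {..<length K}" and "\<Union> (set K) = {1..n}"
  using assms unfolding is_grid_def disjoint_family_on_def by auto

lemma GUV2_if_no_unique_sink:
  assumes grid: "is_grid n d K" and irr: "\<forall>p\<in>vertices K {1..n}. \<sigma> p \<inter> p = {}"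
    and sub: "is_subgrid n K M" and no_sink: "\<nexists>z. is_unique_sink K \<sigma> M z"
  shows "GUV2 n K \<sigma>"
proof -
  have M: "M \<subseteq> \<Union> (set K)" "finite M" "\<forall>i<length K. M \<inter> K!i \<noteq> {}"
    using sub is_gridD(2)[OF grid] finite_subset unfolding is_subgrid_def by auto
  then have "\<forall>p\<in>vertices K M. \<sigma> p \<inter> p = {}"
    using irr vertices_mono[of M "{1..n}" K] is_gridD(2)[OF grid] by auto
  then have "\<not> inj_on (refined_index K \<sigma> M) (vertices K M)"
    using ex_unique_sink_if_inj_on_refined_index[OF is_gridD(1)[OF grid] M] no_sink by blast
  then show ?thesis using sub unfolding GUV2_def inj_on_def by blast
qed

theorem lemma6p3p5:
  fixes n d :: nat and K :: "nat set list" and \<sigma> :: "nat set \<Rightarrow> nat set"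
    and M1 M2 M3 :: "nat set" and x y :: "nat set"
  assumes "is_grid n d K"
    and "is_outmap n K \<sigma>"
    and "\<forall>p\<in>vertices K {1..n}. \<sigma> p \<inter> p = {}"
    and "is_subgrid n K M1" and "is_subgrid n K M2" and "is_subgrid n K M3"
    and "vertices K M1 \<inter> vertices K M2 = {}"
    and "vertices K M1 \<union> vertices K M2 = vertices K M3"
    and "is_unique_sink K \<sigma> M1 x"
    and "is_unique_sink K \<sigma> M2 y"
  shows "is_unique_sink K \<sigma> M3 x \<or> is_unique_sink K \<sigma> M3 y
         \<or> (\<not> is_USO n K \<sigma> \<and> (GUV1 n K \<sigma> \<or> GUV2 n K \<sigma>))"
proof -
  have disj: "disjoint_family_on ((!) K) {..<length K}" and cover: "\<Union> (set K) = {1..n}"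
    using is_gridD[OF assms(1)] by auto
  have "M1 \<subseteq> M3" "M2 \<subseteq> M3"
    using subgrid_mono[OF disj] assms(4,5,8) cover unfolding is_subgrid_def by auto
  show ?thesis
  proof (cases "\<exists>z. is_unique_sink K \<sigma> M3 z")
    case True
    then obtain z where z: "is_unique_sink K \<sigma> M3 z" ..
    then have "z = x \<or> z = y"
      using unique_sink_of_union[OF \<open>M1 \<subseteq> M3\<close> \<open>M2 \<subseteq> M3\<close> _ assms(9,10)] assms(8)
      unfolding is_unique_sink_def by blast
    then show ?thesis using z by blast
  next
    case False
    then have "GUV2 n K \<sigma>" using GUV2_if_no_unique_sink[OF assms(1,3,6)] by blast
    then show ?thesis using False ex_unique_sink_if_USO assms(6) by blast
  qed
qed

end
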